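(* Consider the family of binary symmetric channels with crossover probability $\theta\in[0,1]$, so that $P_\theta(\mathbf y|\mathbf x)=\theta^{d(\mathbf x,\mathbf y)}(1-\theta)^{N-d(\mathbf x,\mathbf y)}$ for $\mathbf x,\mathbf y\in\{0,1\}^N$. Fix $\xi\in[0,1]$ and let $f(\mathbf x,\mathbf y)=\max_{0\le\theta\le1}\left[\frac1N\ln P_\theta(\mathbf y|\mathbf x)+\xi E_r^*(\theta)\right]$, and $\rho(\mathbf x,\mathbf y)=\min\{\delta(\mathbf x,\mathbf y),1-\delta(\mathbf x,\mathbf y)\}$. Then for every $\mathbf y\in\{0,1\}^N$ and all $\mathbf x_1,\mathbf x_2\in\{0,1\}^N$, $f(\mathbf x_1,\mathbf y)\ge f(\mathbf x_2,\mathbf y)$ if and only if $\rho(\mathbf x_1,\mathbf y)\le\rho(\mathbf x_2,\mathbf y)$. Consequently, the minimax decision rule (choose the codeword maximizing $f$) is equivalent to the rule choosing the codeword minimizing $\rho$.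
   Context: $d(\mathbf x,\mathbf y)$ is the Hamming distance and $\delta(\mathbf x,\mathbf y)=d(\mathbf x,\mathbf y)/N$. $E_r^*(\theta)=\max_{0\le\rho\le1}\{\rho\ln2-(1+\rho)\ln[(1-\theta)^{1/(1+\rho)}+\theta^{1/(1+\rho)}]-\rho R\}$ is the random coding error exponent of ML decoding for the BSC at rate $R$ (symmetric about $\theta=1/2$). *)

theory Defs
  imports "HOL-Analysis.Analysis"
begin

text \<open>Binary words of length N are modelled as bool lists of length N.\<close>

definition hamming :: "bool list \<Rightarrow> bool list \<Rightarrow> nat" where
  "hamming x y = card {i. i < length x \<and> x ! i \<noteq> y ! i}"

definition rel_dist :: "nat \<Rightarrow> bool list \<Rightarrow> bool list \<Rightarrow> real" where
  "rel_dist N x y = real (hamming x y) / real N"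

text \<open>BSC transition probability P_theta(y|x); note 0^0 = 1.\<close>
definition bsc_prob :: "nat \<Rightarrow> real \<Rightarrow> bool list \<Rightarrow> bool list \<Rightarrow> real" where
  "bsc_prob N \<theta> x y = \<theta> ^ hamming x y * (1 - \<theta>) ^ (N - hamming x y)"

definition Er_star :: "real \<Rightarrow> real \<Rightarrow> real" where
  "Er_star R \<theta> = (SUP r\<in>{0..1::real}. r * ln 2
       - (1 + r) * ln ((1 - \<theta>) powr (1 / (1 + r)) + \<theta> powr (1 / (1 + r))) - r * R)"

definition ln_ext :: "real \<Rightarrow> ereal" where
  "ln_ext p = (if p > 0 then ereal (ln p) else -\<infinity>)"

definition minimax_metric :: "nat \<Rightarrow> real \<Rightarrow> real \<Rightarrow> bool list \<Rightarrow> bool list \<Rightarrow> ereal" where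
  "minimax_metric N R \<xi> x y =
     (SUP \<theta>\<in>{0..1::real}. ereal (1 / real N) * ln_ext (bsc_prob N \<theta> x y) + ereal (\<xi> * Er_star R \<theta>))"

definition rho_metric :: "nat \<Rightarrow> bool list \<Rightarrow> bool list \<Rightarrow> real" where
  "rho_metric N x y = min (rel_dist N x y) (1 - rel_dist N x y)"

end

theory Submission
  imports Defs
begin

(* For 0 < \<theta> < 1 the objective inside f is, with \<delta> = d(x,y)/N,
   g(\<delta>, \<theta>) = \<delta> ln \<theta> + (1 - \<delta>) ln (1 - \<theta>) + \<xi> E_r^*(\<theta>), which is affine in \<delta>;
   so f, a supremum over \<theta>, is a convex function F of \<delta>, symmetric about 1/2.
   Bounding E_r^* by the Bhattacharyya exponent -ln (2 sqrt(\<theta>(1-\<theta>))) gives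
   F(1/2) \<le> -ln 2, whereas F(\<delta>) > -ln 2 for \<delta> < 1/2 (take \<theta> = (1+2\<delta>)/4).
   Writing \<delta>2 between \<delta>1 and 1/2 as a convex combination then shows that F is
   strictly decreasing on [0, 1/2], hence F(\<delta>) is a strictly decreasing
   function of min \<delta> (1 - \<delta>). *)

definition Er_term :: "real \<Rightarrow> real \<Rightarrow> real \<Rightarrow> real" where
  "Er_term R \<theta> r =
     r * ln 2 - (1 + r) * ln ((1 - \<theta>) powr (1 / (1 + r)) + \<theta> powr (1 / (1 + r))) - r * R"

lemma Er_star_eq_SUP_Er_term: "Er_star R \<theta> = (SUP r\<in>{0..1}. Er_term R \<theta> r)"
  unfolding Er_star_def Er_term_def by simp

lemma Er_star_symmetric: "Er_star R (1 - \<theta>) = Er_star R \<theta>"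
  unfolding Er_star_def by (simp add: add.commute)

lemma Er_term_le_ln2:
  assumes "0 \<le> \<theta>" "\<theta> \<le> 1" "0 \<le> R" "r \<in> {0..1}"
  shows "Er_term R \<theta> r \<le> ln 2"
proof -
  have "1 - \<theta> \<le> (1 - \<theta>) powr (1 / (1 + r))" "\<theta> \<le> \<theta> powr (1 / (1 + r))"
    using assms powr_mono'[of "1 / (1 + r)" 1] by auto
  then have "0 \<le> ln ((1 - \<theta>) powr (1 / (1 + r)) + \<theta> powr (1 / (1 + r)))"
    by simp
  then have "0 \<le> (1 + r) * ln ((1 - \<theta>) powr (1 / (1 + r)) + \<theta> powr (1 / (1 + r)))"
    using assms by simp
  moreover have "r * ln 2 \<le> ln 2" "0 \<le> r * R"
    using assms by auto
  ultimately show ?thesis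
    unfolding Er_term_def by linarith
qed

lemma bdd_above_Er_term:
  assumes "0 \<le> \<theta>" "\<theta> \<le> 1" "0 \<le> R"
  shows "bdd_above (Er_term R \<theta> ` {0..1})"
  using Er_term_le_ln2[OF assms] by (intro bdd_aboveI[of _ "ln 2"]) auto

lemma Er_star_nonneg:
  assumes "0 \<le> \<theta>" "\<theta> \<le> 1" "0 \<le> R"
  shows "0 \<le> Er_star R \<theta>"
proof -
  have "Er_term R \<theta> 0 = 0"
    unfolding Er_term_def using assms by simp
  then show ?thesis
    unfolding Er_star_eq_SUP_Er_term
    using cSUP_upper[OF _ bdd_above_Er_term[OF assms], of 0] by simp
qed

lemma Er_star_le_ln2:
  assumes "0 \<le> \<theta>" "\<theta> \<le> 1" "0 \<le> R"
  shows "Er_star R \<theta> \<le> ln 2"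
  unfolding Er_star_eq_SUP_Er_term using Er_term_le_ln2[OF assms] by (intro cSUP_least) auto

lemma exp_mean_le_exp_add: "2 * exp ((u + v) / 2) \<le> exp u + exp (v::real)"
proof -
  have "0 \<le> (exp (u / 2) - exp (v / 2))\<^sup>2"
    by simp
  also have "\<dots> = exp u + exp v - 2 * exp ((u + v) / 2)"
    by (simp add: power2_eq_square algebra_simps flip: exp_add)
  finally show ?thesis
    by simp
qed

lemma ln_powr_add_ge:
  assumes "0 < x" "0 < y"
  shows "ln 2 + a * (ln x + ln y) / 2 \<le> ln (x powr a + y powr (a::real))"
proof -
  have "2 * exp ((a * ln x + a * ln y) / 2) \<le> x powr a + y powr a"
    using exp_mean_le_exp_add assms by (simp add: powr_def)
  then have "ln (2 * exp ((a * ln x + a * ln y) / 2)) \<le> ln (x powr a + y powr a)"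
    using assms by (subst ln_le_cancel_iff) (auto intro: add_pos_pos)
  then show ?thesis
    by (simp add: ln_mult algebra_simps)
qed

text \<open>The right-hand side is -ln Z for the Bhattacharyya parameter Z = 2 sqrt(\<theta>(1-\<theta>))
  of the BSC.\<close>

lemma Er_term_le_bhattacharyya:
  assumes "0 < \<theta>" "\<theta> < 1" "0 \<le> R" "r \<in> {0..1}"
  shows "Er_term R \<theta> r \<le> - ln 2 - (ln \<theta> + ln (1 - \<theta>)) / 2"
proof -
  define S where "S = ln ((1 - \<theta>) powr (1 / (1 + r)) + \<theta> powr (1 / (1 + r)))"
  have "ln 2 + 1 / (1 + r) * (ln (1 - \<theta>) + ln \<theta>) / 2 \<le> S"
    unfolding S_def by (rule ln_powr_add_ge) (use assms in auto)
  then have "(1 + r) * ln 2 + (ln \<theta> + ln (1 - \<theta>)) / 2 \<le> (1 + r) * S"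
    using assms by (simp add: field_simps)
  moreover have "0 \<le> r * R"
    using assms by simp
  ultimately show ?thesis
    unfolding Er_term_def S_def[symmetric] by (simp add: algebra_simps)
qed

lemma Er_star_le_bhattacharyya:
  assumes "0 < \<theta>" "\<theta> < 1" "0 \<le> R"
  shows "Er_star R \<theta> \<le> - ln 2 - (ln \<theta> + ln (1 - \<theta>)) / 2"
  unfolding Er_star_eq_SUP_Er_term
  using Er_term_le_bhattacharyya[OF assms] by (intro cSUP_least) auto

lemma ln_ge_one_minus_inverse: "0 < (x::real) \<Longrightarrow> 1 - 1 / x \<le> ln x"
  using ln_le_minus_one[of "1 / x"] by (simp add: ln_div)

lemma neg_ln2_less_log_likelihood:
  assumes "0 \<le> (\<delta>::real)" "\<delta> < 1/2"
  shows "- ln 2 < \<delta> * ln ((1 + 2*\<delta>) / 4) + (1 - \<delta>) * ln (1 - (1 + 2*\<delta>) / 4)"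
proof -
  define x1 where "x1 = (1 + 2*\<delta>) / 2"
  define x2 where "x2 = (3 - 2*\<delta>) / 2"
  have pos: "0 < x1" "0 < x2"
    using assms unfolding x1_def x2_def by auto
  have "\<delta> * (1 - 1 / x1) \<le> \<delta> * ln x1" "(1 - \<delta>) * (1 - 1 / x2) \<le> (1 - \<delta>) * ln x2"
    using ln_ge_one_minus_inverse pos assms by (auto intro: mult_left_mono)
  moreover have "\<delta> * (1 - 1 / x1) + (1 - \<delta>) * (1 - 1 / x2)
      = (1 - 2*\<delta>)\<^sup>2 / ((1 + 2*\<delta>) * (3 - 2*\<delta>))"
    unfolding x1_def x2_def using assms by (simp add: field_simps power2_eq_square)
  moreover have "0 < (1 - 2*\<delta>)\<^sup>2 / ((1 + 2*\<delta>) * (3 - 2*\<delta>))"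
    using assms by (intro divide_pos_pos mult_pos_pos) auto
  ultimately have "0 < \<delta> * ln x1 + (1 - \<delta>) * ln x2"
    by linarith
  moreover have "ln ((1 + 2*\<delta>) / 4) = ln x1 - ln 2"
    unfolding x1_def using assms ln_div[of "(1 + 2*\<delta>) / 2" 2] by simp
  moreover have "ln (1 - (1 + 2*\<delta>) / 4) = ln x2 - ln 2"
    unfolding x2_def using assms ln_div[of "(3 - 2*\<delta>) / 2" 2] by (simp add: field_simps)
  moreover have "\<delta> * (ln x1 - ln 2) + (1 - \<delta>) * (ln x2 - ln 2) = \<delta> * ln x1 + (1 - \<delta>) * ln x2 - ln 2"
    by (simp add: algebra_simps)
  ultimately show ?thesis
    by simp
qed

definition minimax_term :: "nat \<Rightarrow> real \<Rightarrow> real \<Rightarrow> nat \<Rightarrow> real \<Rightarrow> ereal" where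
  "minimax_term N R \<xi> d \<theta> =
     ereal (1 / real N) * ln_ext (\<theta> ^ d * (1 - \<theta>) ^ (N - d)) + ereal (\<xi> * Er_star R \<theta>)"

definition minimax_profile :: "nat \<Rightarrow> real \<Rightarrow> real \<Rightarrow> nat \<Rightarrow> ereal" where
  "minimax_profile N R \<xi> d = (SUP \<theta>\<in>{0..1}. minimax_term N R \<xi> d \<theta>)"

definition bsc_score :: "real \<Rightarrow> real \<Rightarrow> real \<Rightarrow> real \<Rightarrow> real" where
  "bsc_score R \<xi> \<delta> \<theta> = \<delta> * ln \<theta> + (1 - \<delta>) * ln (1 - \<theta>) + \<xi> * Er_star R \<theta>"

lemma minimax_metric_eq_profile:
  "minimax_metric N R \<xi> x y = minimax_profile N R \<xi> (hamming x y)"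
  unfolding minimax_metric_def minimax_profile_def minimax_term_def bsc_prob_def by simp

lemma hamming_le_length: "hamming x y \<le> length x"
  unfolding hamming_def by (rule card_mono[of "{..<length x}", simplified, THEN order_trans]) auto

lemma minimax_term_interior:
  assumes "0 < \<theta>" "\<theta> < 1" "d \<le> N" "0 < N"
  shows "minimax_term N R \<xi> d \<theta> = ereal (bsc_score R \<xi> (real d / real N) \<theta>)"
proof -
  have "ln (\<theta> ^ d * (1 - \<theta>) ^ (N - d)) = real d * ln \<theta> + real (N - d) * ln (1 - \<theta>)"
    using assms by (simp add: ln_mult ln_realpow)
  moreover have "(real d * ln \<theta> + real (N - d) * ln (1 - \<theta>)) / real N
      = real d / real N * ln \<theta> + (1 - real d / real N) * ln (1 - \<theta>)"
    using assms by (simp add: of_nat_diff field_simps)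
  ultimately show ?thesis
    unfolding minimax_term_def bsc_score_def ln_ext_def using assms by simp
qed

lemma minimax_term_zero: "0 < d \<Longrightarrow> 0 < N \<Longrightarrow> minimax_term N R \<xi> d 0 = -\<infinity>"
  unfolding minimax_term_def ln_ext_def by (simp add: power_0_left)

lemma minimax_term_one: "d < N \<Longrightarrow> minimax_term N R \<xi> d 1 = -\<infinity>"
  unfolding minimax_term_def ln_ext_def by (simp add: power_0_left)

lemma minimax_term_le_ln2:
  assumes "0 \<le> \<theta>" "\<theta> \<le> 1" "0 \<le> R" "0 \<le> \<xi>" "\<xi> \<le> 1"
  shows "minimax_term N R \<xi> d \<theta> \<le> ereal (ln 2)"
proof -
  define p where "p = \<theta> ^ d * (1 - \<theta>) ^ (N - d)"
  have "p \<le> 1"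
    unfolding p_def using assms by (intro mult_le_one power_le_one) auto
  then have "ln_ext p \<le> 0"
    unfolding ln_ext_def by auto
  then have "ereal (1 / real N) * ln_ext p \<le> 0"
    by (cases "ln_ext p") (auto simp: divide_nonpos_nonneg)
  moreover have "\<xi> * Er_star R \<theta> \<le> ln 2"
    using Er_star_nonneg[OF assms(1-3)] Er_star_le_ln2[OF assms(1-3)] assms
      mult_left_le_one_le[of "Er_star R \<theta>" \<xi>]
    by linarith
  ultimately show ?thesis
    unfolding minimax_term_def p_def[symmetric]
    using add_mono[of _ 0 "ereal (\<xi> * Er_star R \<theta>)" "ereal (ln 2)"] by simp
qed

lemma minimax_profile_le_ln2:
  assumes "0 \<le> R" "0 \<le> \<xi>" "\<xi> \<le> 1"
  shows "minimax_profile N R \<xi> d \<le> ereal (ln 2)"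
  unfolding minimax_profile_def using minimax_term_le_ln2 assms by (intro SUP_least) auto

lemma minimax_profile_symmetric:
  assumes "d \<le> N"
  shows "minimax_profile N R \<xi> (N - d) = minimax_profile N R \<xi> d"
proof -
  have "(\<lambda>t. 1 - t) ` {0..1} = {0..1::real}"
    by (auto intro!: image_eqI[where x = "1 - t" for t])
  then have "minimax_profile N R \<xi> d = (SUP t\<in>{0..1}. minimax_term N R \<xi> d (1 - t))"
    unfolding minimax_profile_def by (metis image_image)
  also have "\<dots> = minimax_profile N R \<xi> (N - d)"
    unfolding minimax_profile_def minimax_term_def Er_star_symmetric
    using assms by (simp add: mult.commute)
  finally show ?thesis ..
qed

lemma bsc_score_half_le:
  assumes "0 < \<theta>" "\<theta> < 1" "0 \<le> R" "0 \<le> \<xi>" "\<xi> \<le> 1"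
  shows "bsc_score R \<xi> (1/2) \<theta> \<le> - ln 2"
proof -
  have "\<xi> * Er_star R \<theta> \<le> Er_star R \<theta>"
    using Er_star_nonneg assms by (simp add: mult_left_le_one_le)
  then show ?thesis
    unfolding bsc_score_def using Er_star_le_bhattacharyya[OF assms(1-3)] by (simp add: field_simps)
qed

lemma minimax_profile_gt_neg_ln2:
  assumes "0 < N" "0 \<le> R" "0 \<le> \<xi>" "2 * d < N"
  shows "ereal (- ln 2) < minimax_profile N R \<xi> d"
proof -
  define \<delta> where "\<delta> = real d / real N"
  define \<theta> where "\<theta> = (1 + 2*\<delta>) / 4"
  have \<delta>: "0 \<le> \<delta>" "\<delta> < 1/2"
    unfolding \<delta>_def using assms by (auto simp: field_simps)
  then have \<theta>: "0 < \<theta>" "\<theta> < 1"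
    unfolding \<theta>_def by auto
  have "- ln 2 < \<delta> * ln \<theta> + (1 - \<delta>) * ln (1 - \<theta>)"
    unfolding \<theta>_def using neg_ln2_less_log_likelihood \<delta> by blast
  also have "\<dots> \<le> bsc_score R \<xi> \<delta> \<theta>"
    unfolding bsc_score_def using Er_star_nonneg \<theta> assms by simp
  finally have "ereal (- ln 2) < minimax_term N R \<xi> d \<theta>"
    using minimax_term_interior \<theta> assms unfolding \<delta>_def by simp
  also have "\<dots> \<le> minimax_profile N R \<xi> d"
    unfolding minimax_profile_def using \<theta> by (intro SUP_upper) auto
  finally show ?thesis .
qed

text \<open>The score is affine in \<delta>, and at \<delta> = 1/2 it is at most -ln 2 for every \<theta>.\<close>

lemma minimax_profile_le_convex_combination:
  assumes "0 < N" "0 \<le> R" "0 \<le> \<xi>" "\<xi> \<le> 1"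
    and "d1 \<le> N" "0 < d2" "d2 < N" "0 \<le> \<mu>" "\<mu> \<le> 1"
    and \<delta>2: "real d2 / real N = \<mu> * (real d1 / real N) + (1 - \<mu>) / 2"
    and P: "minimax_profile N R \<xi> d1 \<le> ereal P"
  shows "minimax_profile N R \<xi> d2 \<le> ereal (\<mu> * P - (1 - \<mu>) * ln 2)"
  unfolding minimax_profile_def
proof (rule SUP_least)
  fix \<theta> :: real
  assume \<theta>: "\<theta> \<in> {0..1}"
  consider "\<theta> = 0" | "\<theta> = 1" | "0 < \<theta>" "\<theta> < 1"
    using \<theta> by fastforce
  then show "minimax_term N R \<xi> d2 \<theta> \<le> ereal (\<mu> * P - (1 - \<mu>) * ln 2)"
  proof cases
    case 3
    have "minimax_term N R \<xi> d1 \<theta> \<le> ereal P"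
      using P \<theta> unfolding minimax_profile_def by (meson SUP_upper order_trans)
    then have "\<mu> * bsc_score R \<xi> (real d1 / real N) \<theta> \<le> \<mu> * P"
      using minimax_term_interior 3 assms by (simp add: mult_left_mono)
    moreover have "(1 - \<mu>) * bsc_score R \<xi> (1/2) \<theta> \<le> (1 - \<mu>) * - ln 2"
      using bsc_score_half_le[of \<theta> R \<xi>] 3 assms by (intro mult_left_mono) auto
    moreover have "bsc_score R \<xi> (real d2 / real N) \<theta>
        = \<mu> * bsc_score R \<xi> (real d1 / real N) \<theta> + (1 - \<mu>) * bsc_score R \<xi> (1/2) \<theta>"
      unfolding bsc_score_def \<delta>2 by (simp add: algebra_simps)
    ultimately show ?thesis
      using minimax_term_interior 3 assms by simp
  qed (use assms minimax_term_zero minimax_term_one in simp_all)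
qed

lemma minimax_profile_strict_antimono:
  assumes "0 < N" "0 \<le> R" "0 \<le> \<xi>" "\<xi> \<le> 1" "d1 < d2" "2 * d2 \<le> N"
  shows "minimax_profile N R \<xi> d2 < minimax_profile N R \<xi> d1"
proof -
  define \<delta>1 where "\<delta>1 = real d1 / real N"
  define \<delta>2 where "\<delta>2 = real d2 / real N"
  define \<mu> where "\<mu> = (1 - 2*\<delta>2) / (1 - 2*\<delta>1)"
  define P where "P = real_of_ereal (minimax_profile N R \<xi> d1)"
  have \<delta>: "0 \<le> \<delta>1" "\<delta>1 < \<delta>2" "\<delta>2 \<le> 1/2"
    unfolding \<delta>1_def \<delta>2_def using assms by (auto simp: field_simps)
  have \<mu>: "0 \<le> \<mu>" "\<mu> < 1"
    unfolding \<mu>_def using \<delta> by (auto simp: field_simps)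
  have "\<mu> * (1 - 2*\<delta>1) = 1 - 2*\<delta>2"
    unfolding \<mu>_def using \<delta> by simp
  then have \<delta>2: "\<delta>2 = \<mu> * \<delta>1 + (1 - \<mu>) / 2"
    by (simp add: field_simps)
  have lower: "ereal (- ln 2) < minimax_profile N R \<xi> d1"
    using minimax_profile_gt_neg_ln2 assms by simp
  then have P: "minimax_profile N R \<xi> d1 = ereal P"
    unfolding P_def using minimax_profile_le_ln2[of R \<xi> N d1] assms
    by (cases "minimax_profile N R \<xi> d1") auto
  have "minimax_profile N R \<xi> d2 \<le> ereal (\<mu> * P - (1 - \<mu>) * ln 2)"
    using assms \<mu> \<delta>2 unfolding \<delta>1_def \<delta>2_def
    by (intro minimax_profile_le_convex_combination[of N R \<xi> d1]) (auto simp: P)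
  also have "\<dots> < ereal P"
  proof -
    have "\<mu> * (P + ln 2) < P + ln 2"
      using lower \<mu> mult_strict_right_mono[of \<mu> 1 "P + ln 2"] unfolding P by simp
    then show ?thesis
      by (simp add: algebra_simps)
  qed
  finally show ?thesis
    unfolding P .
qed

lemma minimax_profile_le_iff:
  assumes "0 < N" "0 \<le> R" "0 \<le> \<xi>" "\<xi> \<le> 1" "d1 \<le> N" "d2 \<le> N"
  shows "minimax_profile N R \<xi> d2 \<le> minimax_profile N R \<xi> d1
    \<longleftrightarrow> min d1 (N - d1) \<le> min d2 (N - d2)"
proof -
  have fold: "minimax_profile N R \<xi> (min d (N - d)) = minimax_profile N R \<xi> d" if "d \<le> N" for d
    using minimax_profile_symmetric[OF that] by (simp add: min_def)
  define m1 m2 where "m1 = min d1 (N - d1)" and "m2 = min d2 (N - d2)"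
  have "2 * m1 \<le> N" "2 * m2 \<le> N"
    unfolding m1_def m2_def by auto
  then have "minimax_profile N R \<xi> m2 \<le> minimax_profile N R \<xi> m1 \<longleftrightarrow> m1 \<le> m2"
    using minimax_profile_strict_antimono[OF assms(1-4), of m1 m2]
      minimax_profile_strict_antimono[OF assms(1-4), of m2 m1]
    by (cases m1 m2 rule: linorder_cases) auto
  then show ?thesis
    unfolding m1_def m2_def fold[OF assms(5)] fold[OF assms(6)] .
qed

lemma rho_metric_eq:
  assumes "length x = N" "0 < N"
  shows "rho_metric N x y = real (min (hamming x y) (N - hamming x y)) / real N"
  using hamming_le_length[of x y] assms
  unfolding rho_metric_def rel_dist_def by (auto simp: min_def of_nat_diff field_simps)

lemma minimax_metric_ge_iff_rho_metric_le:
  assumes "0 < N" "0 \<le> R" "0 \<le> \<xi>" "\<xi> \<le> 1" "length x1 = N" "length x2 = N"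
  shows "minimax_metric N R \<xi> x1 y \<ge> minimax_metric N R \<xi> x2 y
    \<longleftrightarrow> rho_metric N x1 y \<le> rho_metric N x2 y"
  using minimax_profile_le_iff[OF assms(1-4), of "hamming x1 y" "hamming x2 y"]
    hamming_le_length[of x1 y] hamming_le_length[of x2 y] assms
  unfolding minimax_metric_eq_profile rho_metric_eq[OF assms(5,1)] rho_metric_eq[OF assms(6,1)]
  by (simp add: divide_le_cancel)

theorem mainTheorem6:
  fixes N :: nat and R \<xi> :: real
  assumes "0 < N" and "0 \<le> R" and "0 \<le> \<xi>" and "\<xi> \<le> 1"
  shows "(\<forall>y x1 x2. length y = N \<longrightarrow> length x1 = N \<longrightarrow> length x2 = N \<longrightarrow>
            (minimax_metric N R \<xi> x1 y \<ge> minimax_metric N R \<xi> x2 y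
             \<longleftrightarrow> rho_metric N x1 y \<le> rho_metric N x2 y))
       \<and> (\<forall>C y. (\<forall>c\<in>C. length c = N) \<longrightarrow> length y = N \<longrightarrow>
            {x\<in>C. \<forall>x'\<in>C. minimax_metric N R \<xi> x' y \<le> minimax_metric N R \<xi> x y}
            = {x\<in>C. \<forall>x'\<in>C. rho_metric N x y \<le> rho_metric N x' y})"
proof (intro conjI allI impI)
  fix y x1 x2 :: "bool list"
  assume "length x1 = N" "length x2 = N"
  then show "minimax_metric N R \<xi> x1 y \<ge> minimax_metric N R \<xi> x2 y
      \<longleftrightarrow> rho_metric N x1 y \<le> rho_metric N x2 y"
    using minimax_metric_ge_iff_rho_metric_le assms by blast
next
  fix C :: "bool list set" and y :: "bool list"
  assume "\<forall>c\<in>C. length c = N"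
  then show "{x\<in>C. \<forall>x'\<in>C. minimax_metric N R \<xi> x' y \<le> minimax_metric N R \<xi> x y}
      = {x\<in>C. \<forall>x'\<in>C. rho_metric N x y \<le> rho_metric N x' y}"
    using minimax_metric_ge_iff_rho_metric_le[OF assms] by blast
qed

end
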